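(* Let $A,B$ be closed linear relations in $X^2$ such that $\{A,B\}$ is a dual pair with $(A^* )_s|_{D(B)}=B_s$ and $(B^* )_s|_{D(A)}=A_s$. Suppose $B^*(0)\cap N(A^* )=\{0\}$, $A^*(0)\cap N(B^* )=\{0\}$, and $\tilde A\in\mathrm{Ext}\{A,B\}$. Then: (i) $$n(A^*,B)=\dim(D(B^* )/D(\tilde A))+\dim(D(A^* )/D(\tilde A^* ))=\dim(D(\tilde A)/D(A))+\dim(D(\tilde A^* )/D(B)).$$ (ii) If $\tilde A$ is a quasi-selfadjoint extension of $\{A,B\}$, then $n(A^*,B)$ is even and $$\tfrac{1}{2}n(A^*,B)=\dim(D(B^* )/D(\tilde A))=\dim(D(A^* )/D(\tilde A^* ))=\dim(D(\tilde A)/D(A))=\dim(D(\tilde A^* )/D(B)).$$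
   Context: $X$ is a complex Hilbert space; linear relations are linear subspaces of $X^2=X\times X$, with domain $D(T)$, $N(T)=\{x:(x,0)\in T\}$, $T(0)=\{y:(0,y)\in T\}$. Adjoint: $T^*=\{(f,g):\langle g,x\rangle=\langle f,y\rangle\ \forall(x,y)\in T\}$. For closed $T$: $T_\infty=\{(0,y)\in T\}$, $T_s=T\ominus T_\infty$ (an operator with $D(T_s)=D(T)$). Closed relations $A,B$ form a dual pair $\{A,B\}$ if $A\subset B^*$ (equivalently $B\subset A^*$). $\mathrm{Ext}\{A,B\}$ is the set of closed relations $\tilde A$ with $A\subset\tilde A\subset B^*$. $n(A^*,B)=\dim(D(A^* )/D(B))$. An extension $\tilde A\in\mathrm{Ext}\{A,B\}$ is quasi-selfadjoint if $\dim(D(\tilde A)/D(A))=\dim(D(\tilde A^* )/D(B))$. *)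

theory Defs
  imports "HOL-Analysis.Analysis" "HOL-Library.Extended_Nat"
begin

class chilbert_space = real_normed_vector + complete_space +
  fixes scaleC :: "complex \<Rightarrow> 'a \<Rightarrow> 'a"
    and cinner :: "'a \<Rightarrow> 'a \<Rightarrow> complex"
  assumes scaleC_add_right: "scaleC a (x + y) = scaleC a x + scaleC a y"
    and scaleC_add_left: "scaleC (a + b) x = scaleC a x + scaleC b x"
    and scaleC_scaleC: "scaleC a (scaleC b x) = scaleC (a * b) x"
    and scaleC_one: "scaleC 1 x = x"
    and scaleR_scaleC: "scaleR r x = scaleC (complex_of_real r) x"
    and cinner_commute: "cinner x y = cnj (cinner y x)"
    and cinner_add_left: "cinner (x + y) z = cinner x z + cinner y z"
    and cinner_scaleC_left: "cinner (scaleC a x) y = a * cinner x y"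
    and cinner_ge_zero: "0 \<le> Re (cinner x x)"
    and cinner_eq_zero_iff: "cinner x x = 0 \<longleftrightarrow> x = 0"
    and norm_eq_sqrt_cinner: "norm x = sqrt (Re (cinner x x))"

definition lin_rel :: "('a::chilbert_space \<times> 'a) set \<Rightarrow> bool" where
  "lin_rel T \<longleftrightarrow> (0, 0) \<in> T \<and> (\<forall>p\<in>T. \<forall>q\<in>T. p + q \<in> T)
     \<and> (\<forall>c x y. (x, y) \<in> T \<longrightarrow> (scaleC c x, scaleC c y) \<in> T)"

definition closed_lin_rel :: "('a::chilbert_space \<times> 'a) set \<Rightarrow> bool" where
  "closed_lin_rel T \<longleftrightarrow> lin_rel T \<and> closed T"

definition rel_dom :: "('a::chilbert_space \<times> 'a) set \<Rightarrow> 'a set" where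
  "rel_dom T = {x. \<exists>y. (x, y) \<in> T}"

definition rel_ker :: "('a::chilbert_space \<times> 'a) set \<Rightarrow> 'a set" where
  "rel_ker T = {x. (x, 0) \<in> T}"

definition rel_mul :: "('a::chilbert_space \<times> 'a) set \<Rightarrow> 'a set" where
  "rel_mul T = {y. (0, y) \<in> T}"

definition rel_adj :: "('a::chilbert_space \<times> 'a) set \<Rightarrow> ('a \<times> 'a) set" where
  "rel_adj T = {(f, g). \<forall>(x, y)\<in>T. cinner g x = cinner f y}"

definition cinner2 :: "('a::chilbert_space \<times> 'a) \<Rightarrow> ('a \<times> 'a) \<Rightarrow> complex" where
  "cinner2 p q = cinner (fst p) (fst q) + cinner (snd p) (snd q)"

definition orth_diff :: "('a::chilbert_space \<times> 'a) set \<Rightarrow> ('a \<times> 'a) set \<Rightarrow> ('a \<times> 'a) set" where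
  "orth_diff T S = {p \<in> T. \<forall>q\<in>S. cinner2 p q = 0}"

definition rel_inf :: "('a::chilbert_space \<times> 'a) set \<Rightarrow> ('a \<times> 'a) set" where
  "rel_inf T = {p \<in> T. fst p = 0}"

definition rel_s :: "('a::chilbert_space \<times> 'a) set \<Rightarrow> ('a \<times> 'a) set" where
  "rel_s T = orth_diff T (rel_inf T)"

definition rel_restrict :: "('a::chilbert_space \<times> 'a) set \<Rightarrow> 'a set \<Rightarrow> ('a \<times> 'a) set" where
  "rel_restrict T S = {p \<in> T. fst p \<in> S}"

definition dual_pair :: "('a::chilbert_space \<times> 'a) set \<Rightarrow> ('a \<times> 'a) set \<Rightarrow> bool" where
  "dual_pair A B \<longleftrightarrow> closed_lin_rel A \<and> closed_lin_rel B \<and> A \<subseteq> rel_adj B"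

definition Ext :: "('a::chilbert_space \<times> 'a) set \<Rightarrow> ('a \<times> 'a) set \<Rightarrow> ('a \<times> 'a) set set" where
  "Ext A B = {At. closed_lin_rel At \<and> A \<subseteq> At \<and> At \<subseteq> rel_adj B}"

definition lin_indep_mod :: "'a::chilbert_space set \<Rightarrow> 'a set \<Rightarrow> bool" where
  "lin_indep_mod U F \<longleftrightarrow> finite F \<and>
     (\<forall>c. (\<Sum>x\<in>F. scaleC (c x) x) \<in> U \<longrightarrow> (\<forall>x\<in>F. c x = 0))"

text \<open>dim(V/U) for subspaces U \<subseteq> V, with value \<infinity> if infinite.\<close>
definition quot_dim :: "'a::chilbert_space set \<Rightarrow> 'a set \<Rightarrow> enat" where
  "quot_dim V U = Sup {enat (card F) | F. F \<subseteq> V \<and> lin_indep_mod U F}"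

definition def_num :: "('a::chilbert_space \<times> 'a) set \<Rightarrow> ('a \<times> 'a) set \<Rightarrow> enat" where
  "def_num A B = quot_dim (rel_dom (rel_adj A)) (rel_dom B)"

definition quasi_selfadjoint :: "('a::chilbert_space \<times> 'a) set \<Rightarrow> ('a \<times> 'a) set \<Rightarrow> ('a \<times> 'a) set \<Rightarrow> bool" where
  "quasi_selfadjoint A B At \<longleftrightarrow> At \<in> Ext A B \<and>
     quot_dim (rel_dom At) (rel_dom A) = quot_dim (rel_dom (rel_adj At)) (rel_dom B)"

end

theory Submission
  imports Defs
begin

text \<open>Write a, b, c, d for dim D(B*)/D(At), dim D(A*)/D(At*), dim D(At)/D(A) and
dim D(At*)/D(B), where At is the extension. Since D(B) \<subseteq> D(At*) \<subseteq> D(A*), additivity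
of quotient dimensions gives n(A*, B) = b + d, so both parts reduce to a = d and b = c.

All four inequalities behind these equalities are instances of a single estimate: if
P \<subseteq> Q* with P closed and P*(0) \<subseteq> Q(0), then dim D(Q*)/D(P) \<le> dim D(P*)/D(Q).
For (x, y) \<in> Q* let (r1, r2) be its component orthogonal to P; then (-r2, r1) \<in> P*,
and x \<mapsto> -r2 induces an injective linear relation from D(Q*)/D(P) to D(P*)/D(Q):
if -r2 \<in> D(Q), then (-r2, r1) \<in> Q, which together with (r1, r2) \<in> Q* forces
<r1, r1> = -<r2, r2>, i.e. r1 = 0. The hypotheses on the regular parts and on
B*(0) \<inter> N(A*) and A*(0) \<inter> N(B*) serve only to obtain the inclusions A*(0) \<subseteq> B(0)
and B*(0) \<subseteq> A(0) that this estimate requires.\<close>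

section \<open>Complex inner product spaces\<close>

interpretation complex_vector: vector_space "scaleC :: complex \<Rightarrow> 'a \<Rightarrow> 'a::chilbert_space"
  by unfold_locales (simp_all add: scaleC_add_right scaleC_add_left scaleC_scaleC scaleC_one)

lemma cinner_zero_left [simp]: "cinner 0 (y::'a::chilbert_space) = 0"
  using cinner_add_left[of 0 0 y] by simp

lemma cinner_minus_left: "cinner (- x) (y::'a::chilbert_space) = - cinner x y"
  using cinner_scaleC_left[of "-1" x y] by simp

lemma cinner_diff_left: "cinner (x - z) (y::'a::chilbert_space) = cinner x y - cinner z y"
  using cinner_add_left[of x "- z" y] by (simp add: cinner_minus_left)

lemma cinner_add_right: "cinner x (y + z::'a::chilbert_space) = cinner x y + cinner x z"
  by (metis cinner_commute cinner_add_left complex_cnj_add)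

lemma cinner_scaleC_right: "cinner x (scaleC a (y::'a::chilbert_space)) = cnj a * cinner x y"
  by (metis cinner_commute cinner_scaleC_left complex_cnj_mult)

lemma cinner_zero_right [simp]: "cinner x (0::'a::chilbert_space) = 0"
  by (metis cinner_commute cinner_zero_left complex_cnj_zero)

lemma cinner_minus_right: "cinner x (- y::'a::chilbert_space) = - cinner x y"
  by (metis cinner_commute cinner_minus_left complex_cnj_minus)

lemma cinner_diff_right: "cinner x (y - z::'a::chilbert_space) = cinner x y - cinner x z"
  using cinner_add_right[of x "- z"] by (simp add: cinner_minus_right)

lemma power2_norm_eq_cinner: "(norm (x::'a::chilbert_space))\<^sup>2 = Re (cinner x x)"
  using norm_eq_sqrt_cinner[of x] cinner_ge_zero[of x] by simp

lemma cinner_self_eq_norm: "cinner x (x::'a::chilbert_space) = complex_of_real ((norm x)\<^sup>2)"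
proof -
  have "Im (cinner x x) = 0"
    using arg_cong[OF cinner_commute[of x x], of Im] by simp
  then show ?thesis by (simp add: complex_eq_iff power2_norm_eq_cinner)
qed

lemma cinner_self_eq_neg_imp_zero:
  assumes "cinner x x = - cinner y (y::'a::chilbert_space)"
  shows "x = 0 \<and> y = 0"
proof -
  have "(norm x)\<^sup>2 + (norm y)\<^sup>2 = 0"
    using arg_cong[OF assms, of Re] by (simp add: power2_norm_eq_cinner)
  then show ?thesis by (simp add: add_nonneg_eq_0_iff)
qed

lemma parallelogram_law:
  "(norm (x + y::'a::chilbert_space))\<^sup>2 + (norm (x - y))\<^sup>2 = 2 * (norm x)\<^sup>2 + 2 * (norm y)\<^sup>2"
  by (simp add: power2_norm_eq_cinner cinner_add_left cinner_add_right
      cinner_diff_left cinner_diff_right)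

instantiation prod :: (chilbert_space, chilbert_space) chilbert_space
begin

definition scaleC_prod_def: "scaleC c p = (scaleC c (fst p), scaleC c (snd p))"

definition cinner_prod_def: "cinner p q = cinner (fst p) (fst q) + cinner (snd p) (snd q)"

instance proof
  fix a b :: complex and x y z :: "'a \<times> 'b" and r :: real
  show "scaleC a (x + y) = scaleC a x + scaleC a y"
    by (simp add: scaleC_prod_def scaleC_add_right)
  show "scaleC (a + b) x = scaleC a x + scaleC b x"
    by (simp add: scaleC_prod_def scaleC_add_left)
  show "scaleC a (scaleC b x) = scaleC (a * b) x"
    by (simp add: scaleC_prod_def scaleC_scaleC)
  show "scaleC 1 x = x"
    by (simp add: scaleC_prod_def scaleC_one)
  show "scaleR r x = scaleC (complex_of_real r) x"
    by (simp add: scaleC_prod_def scaleR_scaleC prod_eq_iff)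
  show "cinner x y = cnj (cinner y x)"
    by (simp add: cinner_prod_def cinner_commute[of "fst x"] cinner_commute[of "snd x"])
  show "cinner (x + y) z = cinner x z + cinner y z"
    by (simp add: cinner_prod_def cinner_add_left)
  show "cinner (scaleC a x) y = a * cinner x y"
    by (simp add: cinner_prod_def scaleC_prod_def cinner_scaleC_left algebra_simps)
  show "0 \<le> Re (cinner x x)"
    by (simp add: cinner_prod_def cinner_ge_zero)
  show "norm x = sqrt (Re (cinner x x))"
    by (simp add: norm_prod_def cinner_prod_def power2_norm_eq_cinner)
  show "cinner x x = 0 \<longleftrightarrow> x = 0"
  proof
    assume "cinner x x = 0"
    then have "(norm (fst x))\<^sup>2 + (norm (snd x))\<^sup>2 = 0"
      by (simp add: cinner_prod_def power2_norm_eq_cinner flip: plus_complex.sel)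
    then show "x = 0"
      by (simp add: add_nonneg_eq_0_iff prod_eq_iff)
  qed (simp add: cinner_prod_def)
qed

end

lemma scaleC_Pair [simp]: "scaleC c (a, b) = (scaleC c a, scaleC c b)"
  by (simp add: scaleC_prod_def)

lemma cinner_Pair [simp]: "cinner (a, b) (c, d) = cinner a c + cinner b d"
  by (simp add: cinner_prod_def)

section \<open>Orthogonal projection onto closed subspaces\<close>

lemma cinner_eq_0_if_norm_minimal:
  fixes w s :: "'a::chilbert_space"
  assumes min: "\<And>t. norm w \<le> norm (w - scaleC t s)"
  shows "cinner w s = 0"
proof (cases "s = 0")
  case False
  define \<alpha> where "\<alpha> = cinner w s"
  define r where "r = (norm s)\<^sup>2"
  have "r > 0" using False by (simp add: r_def)
  define t where "t = \<alpha> / complex_of_real r"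
  have "cinner s w = cnj \<alpha>" by (simp add: \<alpha>_def cinner_commute[of s w])
  then have "cinner (w - scaleC t s) (w - scaleC t s) = cinner w w - \<alpha> * cnj \<alpha> / complex_of_real r"
    using \<open>r > 0\<close>
    by (simp add: t_def \<alpha>_def cinner_diff_left cinner_diff_right cinner_scaleC_left
        cinner_scaleC_right cinner_self_eq_norm[of s] r_def[symmetric] field_simps)
  then have "(norm (w - scaleC t s))\<^sup>2 = (norm w)\<^sup>2 - (cmod \<alpha>)\<^sup>2 / r"
    by (simp add: power2_norm_eq_cinner flip: complex_norm_square)
  moreover have "(norm w)\<^sup>2 \<le> (norm (w - scaleC t s))\<^sup>2"
    using min by (simp add: power_mono)
  ultimately have "(cmod \<alpha>)\<^sup>2 / r \<le> 0" by simp
  then show ?thesis using \<open>r > 0\<close> by (simp add: \<alpha>_def divide_le_0_iff)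
qed simp

lemma norm_diff_le_if_near_minimal:
  fixes z a b :: "'a::chilbert_space"
  assumes "d \<le> (norm (z - scaleR (1/2) (a + b)))\<^sup>2"
    and "(norm (z - a))\<^sup>2 \<le> d + e1" and "(norm (z - b))\<^sup>2 \<le> d + e2"
  shows "(norm (a - b))\<^sup>2 \<le> 2 * e1 + 2 * e2"
proof -
  have "(z - a) + (z - b) = scaleR 2 (z - scaleR (1/2) (a + b))"
    by (simp add: algebra_simps scaleR_2)
  then have "4 * d \<le> (norm ((z - a) + (z - b)))\<^sup>2"
    using assms(1) by (simp add: power_mult_distrib)
  then show ?thesis
    using parallelogram_law[of "z - a" "z - b"] assms(2,3) by (simp add: norm_minus_commute)
qed

lemma Cauchy_if_dist_le_add:
  fixes s :: "nat \<Rightarrow> 'a::metric_space"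
  assumes dist: "\<And>m n. dist (s m) (s n) \<le> f m + f n" and "f \<longlonglongrightarrow> 0"
  shows "Cauchy s"
proof (rule metric_CauchyI)
  fix e :: real
  assume "0 < e"
  then obtain M where M: "\<forall>n\<ge>M. norm (f n - 0) < e / 2"
    using \<open>f \<longlonglongrightarrow> 0\<close> LIMSEQ_iff[of f 0] half_gt_zero by blast
  have "dist (s m) (s n) < e" if "M \<le> m" "M \<le> n" for m n
  proof -
    have "\<bar>f m\<bar> < e / 2" "\<bar>f n\<bar> < e / 2" using M that by auto
    then show ?thesis using dist[of m n] by linarith
  qed
  then show "\<exists>M. \<forall>m\<ge>M. \<forall>n\<ge>M. dist (s m) (s n) < e" by blast
qed

lemma closed_subspace_nearest_point:
  fixes S :: "'a::chilbert_space set"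
  assumes "closed S" and S: "complex_vector.subspace S"
  obtains p where "p \<in> S" "\<And>q. q \<in> S \<Longrightarrow> norm (z - p) \<le> norm (z - q)"
proof -
  define d where "d = Inf ((\<lambda>q. (norm (z - q))\<^sup>2) ` S)"
  have d_le: "d \<le> (norm (z - q))\<^sup>2" if "q \<in> S" for q
    unfolding d_def by (rule cInf_lower) (use that in \<open>auto intro: bdd_belowI[of _ 0]\<close>)
  have "\<exists>q\<in>S. (norm (z - q))\<^sup>2 < d + inverse (real (Suc n))" for n
    using cInf_lessD[of "(\<lambda>q. (norm (z - q))\<^sup>2) ` S" "d + inverse (real (Suc n))"]
      complex_vector.subspace_0[OF S] by (auto simp: d_def)
  then obtain s where s: "\<And>n. s n \<in> S"
    and s_approx: "\<And>n. (norm (z - s n))\<^sup>2 < d + inverse (real (Suc n))"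
    by metis
  have dist_s: "(norm (s m - s n))\<^sup>2 \<le> 2 * inverse (real (Suc m)) + 2 * inverse (real (Suc n))" for m n
  proof (rule norm_diff_le_if_near_minimal)
    have "scaleR (1/2) (s m + s n) \<in> S"
      unfolding scaleR_scaleC
      using s S by (intro complex_vector.subspace_scale complex_vector.subspace_add)
    then show "d \<le> (norm (z - scaleR (1/2) (s m + s n)))\<^sup>2" by (rule d_le)
  qed (use s_approx less_imp_le in blast)+
  have "Cauchy s"
  proof (rule Cauchy_if_dist_le_add)
    show "dist (s m) (s n) \<le> sqrt (2 * inverse (real (Suc m))) + sqrt (2 * inverse (real (Suc n)))"
      for m n
      using real_le_rsqrt[OF dist_s[of m n]]
        sqrt_add_le_add_sqrt[of "2 * inverse (real (Suc m))" "2 * inverse (real (Suc n))"]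
      by (simp add: dist_norm)
    show "(\<lambda>n. sqrt (2 * inverse (real (Suc n)))) \<longlonglongrightarrow> 0"
      using tendsto_real_sqrt[OF tendsto_mult_left[OF LIMSEQ_inverse_real_of_nat, of 2]] by simp
  qed
  then obtain p where lim: "s \<longlonglongrightarrow> p"
    using Cauchy_convergent convergent_def by blast
  have "p \<in> S"
    using closed_sequentially[OF \<open>closed S\<close>] s lim by blast
  have "(norm (z - p))\<^sup>2 \<le> d"
  proof (rule LIMSEQ_le[OF _ LIMSEQ_inverse_real_of_nat_add[of d]])
    show "(\<lambda>n. (norm (z - s n))\<^sup>2) \<longlonglongrightarrow> (norm (z - p))\<^sup>2"
      by (intro tendsto_intros lim)
    show "\<exists>N. \<forall>n\<ge>N. (norm (z - s n))\<^sup>2 \<le> d + inverse (real (Suc n))"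
      using s_approx less_imp_le by blast
  qed
  then have sq: "(norm (z - p))\<^sup>2 \<le> (norm (z - q))\<^sup>2" if "q \<in> S" for q
    using d_le[OF that] by linarith
  have "norm (z - p) \<le> norm (z - q)" if "q \<in> S" for q
    using power2_le_imp_le[OF sq[OF that] norm_ge_zero] .
  with \<open>p \<in> S\<close> show thesis by (rule that)
qed

definition has_orthogonal_projection :: "'a::chilbert_space set \<Rightarrow> bool" where
  "has_orthogonal_projection S \<longleftrightarrow> (\<forall>z. \<exists>p\<in>S. \<forall>q\<in>S. cinner (z - p) q = 0)"

lemma closed_subspace_has_orthogonal_projection:
  assumes "closed S" and S: "complex_vector.subspace S"
  shows "has_orthogonal_projection S"
  unfolding has_orthogonal_projection_def
proof
  fix z
  obtain p where p: "p \<in> S" and nearest: "\<And>q. q \<in> S \<Longrightarrow> norm (z - p) \<le> norm (z - q)"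
    using closed_subspace_nearest_point[OF assms] by blast
  have "cinner (z - p) q = 0" if "q \<in> S" for q
  proof (rule cinner_eq_0_if_norm_minimal)
    fix t
    have "p + scaleC t q \<in> S"
      using p that S by (intro complex_vector.subspace_add complex_vector.subspace_scale)
    then show "norm (z - p) \<le> norm (z - p - scaleC t q)"
      using nearest[of "p + scaleC t q"] by (simp only: diff_diff_eq)
  qed
  then show "\<exists>p\<in>S. \<forall>q\<in>S. cinner (z - p) q = 0" using p by blast
qed

section \<open>Dimensions of quotient spaces\<close>

lemma lin_indep_mod_subset:
  assumes indep: "lin_indep_mod U F" and "G \<subseteq> F"
  shows "lin_indep_mod U G"
  unfolding lin_indep_mod_def
proof (intro conjI allI impI)
  have "finite F" using indep by (simp add: lin_indep_mod_def)
  then show "finite G" using \<open>G \<subseteq> F\<close> by (rule rev_finite_subset)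
  fix c
  assume "(\<Sum>x\<in>G. scaleC (c x) x) \<in> U"
  define c' where "c' v = (if v \<in> G then c v else 0)" for v
  have "(\<Sum>x\<in>F. scaleC (c' x) x) = (\<Sum>x\<in>G. scaleC (c x) x)"
    using \<open>finite F\<close> \<open>G \<subseteq> F\<close> by (intro sum.mono_neutral_cong_right) (auto simp: c'_def)
  then have "\<forall>x\<in>F. c' x = 0"
    using indep \<open>(\<Sum>x\<in>G. scaleC (c x) x) \<in> U\<close> by (simp add: lin_indep_mod_def)
  then show "\<forall>x\<in>G. c x = 0"
    using \<open>G \<subseteq> F\<close> by (metis (mono_tags) c'_def subsetD)
qed

lemma lin_indep_mod_disjoint:
  assumes "lin_indep_mod U F"
  shows "F \<inter> U = {}"
proof (rule ccontr)
  assume "F \<inter> U \<noteq> {}"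
  then obtain x where "x \<in> F" "x \<in> U" by blast
  define c where "c v = (if v = x then 1 else 0 :: complex)" for v
  have "(\<Sum>v\<in>F. scaleC (c v) v) = (\<Sum>v\<in>F. if v = x then x else 0)"
    by (rule sum.cong) (auto simp: c_def)
  also have "\<dots> = x"
    using assms \<open>x \<in> F\<close> by (simp add: lin_indep_mod_def)
  finally have "c x = 0"
    using assms \<open>x \<in> F\<close> \<open>x \<in> U\<close> by (simp add: lin_indep_mod_def)
  then show False by (simp add: c_def)
qed

lemma lin_indep_mod_image:
  assumes "finite F" and "0 \<in> U"
    and indep: "\<And>c. (\<Sum>x\<in>F. scaleC (c x) (X x)) \<in> U \<Longrightarrow> \<forall>x\<in>F. c x = 0"
  shows "inj_on X F" and "lin_indep_mod U (X ` F)"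
proof -
  show inj: "inj_on X F"
  proof (rule inj_onI, rule ccontr)
    fix x y
    assume "x \<in> F" "y \<in> F" "X x = X y" "x \<noteq> y"
    define c where "c v = (if v = x then 1 else if v = y then -1 else 0 :: complex)" for v
    have "(\<Sum>v\<in>F. scaleC (c v) (X v)) = (\<Sum>v\<in>{x, y}. scaleC (c v) (X v))"
      using \<open>finite F\<close> \<open>x \<in> F\<close> \<open>y \<in> F\<close> by (intro sum.mono_neutral_right) (auto simp: c_def)
    also have "\<dots> = 0"
      using \<open>X x = X y\<close> \<open>x \<noteq> y\<close> by (simp add: c_def)
    finally have "c x = 0"
      using indep[of c] \<open>0 \<in> U\<close> \<open>x \<in> F\<close> by simp
    then show False by (simp add: c_def)
  qed
  show "lin_indep_mod U (X ` F)"
    unfolding lin_indep_mod_def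
  proof (intro conjI allI impI)
    show "finite (X ` F)" using \<open>finite F\<close> by simp
    fix c
    assume "(\<Sum>y\<in>X ` F. scaleC (c y) y) \<in> U"
    then have "(\<Sum>x\<in>F. scaleC (c (X x)) (X x)) \<in> U"
      by (simp add: sum.reindex[OF inj])
    then show "\<forall>y\<in>X ` F. c y = 0"
      using indep[of "c \<circ> X"] by simp
  qed
qed

lemma lin_indep_mod_iff:
  assumes U: "complex_vector.subspace U"
  shows "lin_indep_mod U F \<longleftrightarrow>
    finite F \<and> complex_vector.independent F \<and> complex_vector.span F \<inter> U \<subseteq> {0}"
proof
  assume indep: "lin_indep_mod U F"
  then have "finite F" by (simp add: lin_indep_mod_def)
  moreover have "complex_vector.independent F"
    using \<open>finite F\<close> indep complex_vector.subspace_0[OF U]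
    by (intro complex_vector.independent_if_scalars_zero) (auto simp: lin_indep_mod_def)
  moreover have "u = 0" if u: "u \<in> complex_vector.span F" "u \<in> U" for u
  proof -
    obtain d where d: "u = (\<Sum>v\<in>F. scaleC (d v) v)"
      using u(1) unfolding complex_vector.span_finite[OF \<open>finite F\<close>] by blast
    with indep u(2) have "\<forall>v\<in>F. d v = 0" by (simp add: lin_indep_mod_def)
    then show ?thesis by (simp add: d)
  qed
  ultimately show "finite F \<and> complex_vector.independent F \<and> complex_vector.span F \<inter> U \<subseteq> {0}"
    by blast
next
  assume F: "finite F \<and> complex_vector.independent F \<and> complex_vector.span F \<inter> U \<subseteq> {0}"
  show "lin_indep_mod U F"
    unfolding lin_indep_mod_def
  proof (intro conjI allI impI)
    show "finite F" using F by blast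
    fix c
    assume "(\<Sum>x\<in>F. scaleC (c x) x) \<in> U"
    moreover have "(\<Sum>x\<in>F. scaleC (c x) x) \<in> complex_vector.span F"
      by (intro complex_vector.span_sum complex_vector.span_scale complex_vector.span_base)
    ultimately have "(\<Sum>x\<in>F. scaleC (c x) x) = 0" using F by blast
    then show "\<forall>x\<in>F. c x = 0"
      using F complex_vector.dependent_finite by blast
  qed
qed

lemma independent_span_Diff_Int_span:
  assumes B: "complex_vector.independent B" "finite B" and "H \<subseteq> B"
  shows "complex_vector.span (B - H) \<inter> complex_vector.span H \<subseteq> {0}"
proof clarify
  fix u
  assume u: "u \<in> complex_vector.span (B - H)" "u \<in> complex_vector.span H"
  have "finite H" "finite (B - H)"
    using B(2) \<open>H \<subseteq> B\<close> by (auto dest: rev_finite_subset)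
  obtain c where c: "u = (\<Sum>v\<in>B - H. scaleC (c v) v)"
    using u(1) unfolding complex_vector.span_finite[OF \<open>finite (B - H)\<close>] by blast
  obtain d where d: "u = (\<Sum>v\<in>H. scaleC (d v) v)"
    using u(2) unfolding complex_vector.span_finite[OF \<open>finite H\<close>] by blast
  define e where "e v = (if v \<in> H then - d v else c v)" for v
  have "(\<Sum>v\<in>B. scaleC (e v) v) = (\<Sum>v\<in>B - H. scaleC (e v) v) + (\<Sum>v\<in>H. scaleC (e v) v)"
    using \<open>H \<subseteq> B\<close> B(2) by (rule sum.subset_diff)
  also have "(\<Sum>v\<in>B - H. scaleC (e v) v) = u"
    unfolding c by (rule sum.cong) (auto simp: e_def)
  also have "(\<Sum>v\<in>H. scaleC (e v) v) = - u"
    unfolding d by (simp add: e_def sum_negf)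
  finally have "\<forall>v\<in>B. e v = 0"
    using B complex_vector.dependent_finite by auto
  then have "\<forall>v\<in>B - H. c v = 0"
    by (auto simp: e_def)
  then show "u = 0"
    by (simp add: c)
qed

lemma lin_indep_mod_Diff:
  assumes W: "complex_vector.subspace W" and B: "complex_vector.independent B" "finite B"
    and "H \<subseteq> B" and "complex_vector.span B \<inter> W \<subseteq> complex_vector.span H"
  shows "lin_indep_mod W (B - H)"
  unfolding lin_indep_mod_iff[OF W]
proof (intro conjI)
  show "finite (B - H)" using B(2) by simp
  show "complex_vector.independent (B - H)"
    using B(1) by (rule complex_vector.independent_mono) blast
  have "complex_vector.span (B - H) \<inter> W \<subseteq> complex_vector.span (B - H) \<inter> complex_vector.span H"
    using complex_vector.span_mono[of "B - H" B] assms(5) by blast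
  also have "\<dots> \<subseteq> {0}"
    using independent_span_Diff_Int_span[OF B \<open>H \<subseteq> B\<close>] .
  finally show "complex_vector.span (B - H) \<inter> W \<subseteq> {0}" .
qed

lemma card_le_quot_dim: "F \<subseteq> V \<Longrightarrow> lin_indep_mod U F \<Longrightarrow> enat (card F) \<le> quot_dim V U"
  unfolding quot_dim_def by (rule Sup_upper) blast

lemma quot_dim_geE:
  assumes "enat k \<le> quot_dim V U"
  obtains F where "F \<subseteq> V" "lin_indep_mod U F" "card F = k"
proof (cases k)
  case 0
  then show thesis by (intro that[of "{}"]) (simp_all add: lin_indep_mod_def)
next
  case (Suc j)
  then have "enat j < Sup {enat (card F) |F. F \<subseteq> V \<and> lin_indep_mod U F}"
    using assms by (simp add: quot_dim_def Suc_ile_eq)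
  then obtain F where F: "F \<subseteq> V" "lin_indep_mod U F" "k \<le> card F"
    using Suc by (auto simp: less_Sup_iff)
  then obtain G where "G \<subseteq> F" "card G = k"
    by (meson obtain_subset_with_card_n)
  then show thesis
    using F lin_indep_mod_subset by (intro that[of G]) auto
qed

text \<open>R need not be a function: lift and faithful only say that it induces an injective
linear relation from V/U to V'/U'.\<close>

lemma quot_dim_le_via_relation:
  fixes R :: "('a::chilbert_space \<times> 'b::chilbert_space) set"
  assumes R: "complex_vector.subspace R" and U: "complex_vector.subspace U" and "0 \<in> U'"
    and lift: "\<And>x. x \<in> V \<Longrightarrow> \<exists>w x'. (w, x') \<in> R \<and> x' \<in> V' \<and> x - w \<in> U"
    and faithful: "\<And>w x'. (w, x') \<in> R \<Longrightarrow> x' \<in> U' \<Longrightarrow> w \<in> U"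
  shows "quot_dim V U \<le> quot_dim V' U'"
  unfolding quot_dim_def[of V U]
proof (rule Sup_least, clarify)
  fix F
  assume "F \<subseteq> V" and F: "lin_indep_mod U F"
  have "finite F" using F by (simp add: lin_indep_mod_def)
  have "\<forall>x\<in>F. \<exists>p. p \<in> R \<and> snd p \<in> V' \<and> x - fst p \<in> U"
    using lift \<open>F \<subseteq> V\<close> by fastforce
  then obtain g where g: "\<forall>x\<in>F. g x \<in> R \<and> snd (g x) \<in> V' \<and> x - fst (g x) \<in> U"
    by (rule bchoice[THEN exE])
  define W where "W = fst \<circ> g"
  define X where "X = snd \<circ> g"
  have WX: "\<And>x. x \<in> F \<Longrightarrow> (W x, X x) \<in> R"
    and X: "\<And>x. x \<in> F \<Longrightarrow> X x \<in> V'" and W: "\<And>x. x \<in> F \<Longrightarrow> x - W x \<in> U"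
    using g by (simp_all add: W_def X_def)
  have "\<forall>x\<in>F. c x = 0" if "(\<Sum>x\<in>F. scaleC (c x) (X x)) \<in> U'" for c
  proof -
    have "(\<Sum>x\<in>F. scaleC (c x) (W x, X x)) \<in> R"
      using WX by (intro complex_vector.subspace_sum[OF R] complex_vector.subspace_scale[OF R])
    moreover have "(\<Sum>x\<in>F. scaleC (c x) (W x, X x))
        = ((\<Sum>x\<in>F. scaleC (c x) (W x)), (\<Sum>x\<in>F. scaleC (c x) (X x)))"
      by (simp add: prod_eq_iff fst_sum snd_sum)
    ultimately have "(\<Sum>x\<in>F. scaleC (c x) (W x)) \<in> U"
      using faithful that by simp
    moreover have "(\<Sum>x\<in>F. scaleC (c x) (x - W x)) \<in> U"
      using W by (intro complex_vector.subspace_sum[OF U] complex_vector.subspace_scale[OF U])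
    ultimately have "(\<Sum>x\<in>F. scaleC (c x) (W x)) + (\<Sum>x\<in>F. scaleC (c x) (x - W x)) \<in> U"
      by (rule complex_vector.subspace_add[OF U])
    then have "(\<Sum>x\<in>F. scaleC (c x) x) \<in> U"
      by (simp add: complex_vector.scale_right_diff_distrib flip: sum.distrib)
    then show ?thesis using F by (simp add: lin_indep_mod_def)
  qed
  then have "inj_on X F" and "lin_indep_mod U' (X ` F)"
    using lin_indep_mod_image[OF \<open>finite F\<close> \<open>0 \<in> U'\<close>] by blast+
  moreover have "X ` F \<subseteq> V'" using X by blast
  ultimately show "enat (card F) \<le> quot_dim V' U'"
    using card_le_quot_dim[of "X ` F" V' U'] by (simp add: card_image)
qed

lemma enat_add_leI:
  fixes x y z :: enat
  assumes "\<And>m n. enat m \<le> x \<Longrightarrow> enat n \<le> y \<Longrightarrow> enat (m + n) \<le> z"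
  shows "x + y \<le> z"
proof (cases "x = \<infinity> \<or> y = \<infinity>")
  case True
  then have all_le: "enat n \<le> z" for n
    using assms[of n 0] assms[of 0 n] by (auto simp flip: zero_enat_def)
  have "z = \<infinity>"
  proof (cases z)
    case (enat k)
    then show ?thesis using all_le[of "Suc k"] by simp
  qed simp
  then show ?thesis by simp
next
  case False
  then obtain m n where "x = enat m" "y = enat n" by auto
  then show ?thesis using assms[of m n] by simp
qed

lemma lin_indep_mod_Un:
  assumes W: "complex_vector.subspace W" and "U \<subseteq> W"
    and F1: "lin_indep_mod W F1" and "F2 \<subseteq> W" and F2: "lin_indep_mod U F2"
  shows "lin_indep_mod U (F1 \<union> F2)"
  unfolding lin_indep_mod_def
proof (intro conjI allI impI)
  have fin: "finite F1" "finite F2" using F1 F2 by (simp_all add: lin_indep_mod_def)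
  then show "finite (F1 \<union> F2)" by simp
  have "F1 \<inter> F2 = {}" using lin_indep_mod_disjoint[OF F1] \<open>F2 \<subseteq> W\<close> by blast
  fix c
  assume "(\<Sum>x\<in>F1 \<union> F2. scaleC (c x) x) \<in> U"
  then have sum_U: "(\<Sum>x\<in>F1. scaleC (c x) x) + (\<Sum>x\<in>F2. scaleC (c x) x) \<in> U"
    using fin \<open>F1 \<inter> F2 = {}\<close> by (simp add: sum.union_disjoint)
  have "(\<Sum>x\<in>F2. scaleC (c x) x) \<in> W"
    using \<open>F2 \<subseteq> W\<close> by (intro complex_vector.subspace_sum[OF W] complex_vector.subspace_scale[OF W]) auto
  then have "(\<Sum>x\<in>F1. scaleC (c x) x) \<in> W"
    using complex_vector.subspace_diff[OF W _ \<open>(\<Sum>x\<in>F2. scaleC (c x) x) \<in> W\<close>] sum_U \<open>U \<subseteq> W\<close>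
    by fastforce
  then have c1: "\<forall>x\<in>F1. c x = 0"
    using F1 by (simp add: lin_indep_mod_def)
  then have "(\<Sum>x\<in>F2. scaleC (c x) x) \<in> U"
    using sum_U by simp
  then have "\<forall>x\<in>F2. c x = 0"
    using F2 by (simp add: lin_indep_mod_def)
  with c1 show "\<forall>x\<in>F1 \<union> F2. c x = 0" by blast
qed

lemma quot_dim_add_le:
  assumes "complex_vector.subspace W" "U \<subseteq> W" "W \<subseteq> V"
  shows "quot_dim V W + quot_dim W U \<le> quot_dim V U"
proof (rule enat_add_leI)
  fix m n
  assume "enat m \<le> quot_dim V W" "enat n \<le> quot_dim W U"
  obtain F1 where F1: "F1 \<subseteq> V" "lin_indep_mod W F1" "card F1 = m"
    using \<open>enat m \<le> quot_dim V W\<close> by (rule quot_dim_geE)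
  obtain F2 where F2: "F2 \<subseteq> W" "lin_indep_mod U F2" "card F2 = n"
    using \<open>enat n \<le> quot_dim W U\<close> by (rule quot_dim_geE)
  have "F1 \<inter> F2 = {}"
    using lin_indep_mod_disjoint[OF F1(2)] F2(1) by blast
  then have "card (F1 \<union> F2) = m + n"
    using F1 F2 by (simp add: card_Un_disjoint lin_indep_mod_def)
  moreover have "F1 \<union> F2 \<subseteq> V" using F1 F2 assms by blast
  ultimately show "enat (m + n) \<le> quot_dim V U"
    using card_le_quot_dim[OF _ lin_indep_mod_Un[OF assms(1,2) F1(2) F2(1,2)]] by simp
qed

lemma quot_dim_le_add:
  assumes V: "complex_vector.subspace V" and W: "complex_vector.subspace W"
    and U: "complex_vector.subspace U"
  shows "quot_dim V U \<le> quot_dim V W + quot_dim W U"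
  unfolding quot_dim_def[of V U]
proof (rule Sup_least, clarify)
  fix F
  assume "F \<subseteq> V" and "lin_indep_mod U F"
  then have "finite F" and "complex_vector.independent F"
    and FU: "complex_vector.span F \<inter> U \<subseteq> {0}"
    using lin_indep_mod_iff[OF U] by auto
  define S where "S = complex_vector.span F"
  obtain H where H: "H \<subseteq> S \<inter> W" "complex_vector.independent H" "S \<inter> W \<subseteq> complex_vector.span H"
    using complex_vector.maximal_independent_subset by blast
  obtain B where B: "H \<subseteq> B" "B \<subseteq> S" "complex_vector.independent B" "S \<subseteq> complex_vector.span B"
    using complex_vector.maximal_independent_subset_extend[of H S] H by blast
  have "finite B"
    using complex_vector.independent_span_bound[OF \<open>finite F\<close> B(3)] B(2) by (simp add: S_def)
  have "card F \<le> card B"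
    using complex_vector.independent_span_bound[OF \<open>finite B\<close> \<open>complex_vector.independent F\<close>]
      B(4) complex_vector.span_superset[of F] by (auto simp: S_def)
  also have "\<dots> = card (B - H) + card H"
    using B(1) \<open>finite B\<close> card_mono[OF \<open>finite B\<close> B(1)]
    by (simp add: card_Diff_subset finite_subset)
  finally have card_F: "card F \<le> card (B - H) + card H" .
  have "S \<subseteq> V"
    unfolding S_def using \<open>F \<subseteq> V\<close> V by (rule complex_vector.span_minimal)
  have span_S: "complex_vector.span X \<subseteq> S" if "X \<subseteq> S" for X
    using that by (simp add: S_def complex_vector.span_minimal)
  have "complex_vector.span B \<inter> W \<subseteq> complex_vector.span H"
    using span_S[OF B(2)] H(3) by blast
  with W B(3) \<open>finite B\<close> B(1) have "lin_indep_mod W (B - H)"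
    by (rule lin_indep_mod_Diff)
  then have BH: "enat (card (B - H)) \<le> quot_dim V W"
    using B(2) \<open>S \<subseteq> V\<close> by (intro card_le_quot_dim) auto
  have "lin_indep_mod U H"
    unfolding lin_indep_mod_iff[OF U]
    using \<open>finite B\<close> B(1) H(1,2) span_S[of H] FU by (auto simp: S_def dest: rev_finite_subset)
  then have "enat (card H) \<le> quot_dim W U"
    using H(1) by (intro card_le_quot_dim) auto
  have "enat (card F) \<le> enat (card (B - H)) + enat (card H)"
    using card_F by simp
  also have "\<dots> \<le> quot_dim V W + quot_dim W U"
    using BH \<open>enat (card H) \<le> quot_dim W U\<close> by (rule add_mono)
  finally show "enat (card F) \<le> quot_dim V W + quot_dim W U" .
qed

lemma quot_dim_add:
  assumes "complex_vector.subspace V" "complex_vector.subspace W" "complex_vector.subspace U"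
    and "U \<subseteq> W" "W \<subseteq> V"
  shows "quot_dim V U = quot_dim V W + quot_dim W U"
  using quot_dim_le_add[OF assms(1-3)] quot_dim_add_le[OF assms(2,4,5)] by (rule order.antisym)

section \<open>Linear relations and their adjoints\<close>

lemma lin_rel_iff_subspace: "lin_rel T \<longleftrightarrow> complex_vector.subspace T"
  unfolding lin_rel_def complex_vector.subspace_def by (auto simp: zero_prod_def) (metis scaleC_Pair)

lemma lin_rel_zero: "lin_rel T \<Longrightarrow> (0, 0) \<in> T"
  by (simp add: lin_rel_def)

lemma lin_rel_add: "lin_rel T \<Longrightarrow> (a, b) \<in> T \<Longrightarrow> (c, d) \<in> T \<Longrightarrow> (a + c, b + d) \<in> T"
  unfolding lin_rel_def by (metis add_Pair)

lemma lin_rel_scaleC: "lin_rel T \<Longrightarrow> (a, b) \<in> T \<Longrightarrow> (scaleC c a, scaleC c b) \<in> T"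
  by (simp add: lin_rel_def)

lemma lin_rel_diff: "lin_rel T \<Longrightarrow> (a, b) \<in> T \<Longrightarrow> (c, d) \<in> T \<Longrightarrow> (a - c, b - d) \<in> T"
  unfolding lin_rel_iff_subspace by (metis complex_vector.subspace_diff diff_Pair)

lemma closed_lin_rel_has_orthogonal_projection:
  "closed_lin_rel T \<Longrightarrow> has_orthogonal_projection T"
  by (simp add: closed_lin_rel_def lin_rel_iff_subspace closed_subspace_has_orthogonal_projection)

lemma subspace_rel_dom: "lin_rel T \<Longrightarrow> complex_vector.subspace (rel_dom T)"
  unfolding lin_rel_def complex_vector.subspace_def rel_dom_def by fastforce

lemma subspace_rel_mul: "lin_rel T \<Longrightarrow> complex_vector.subspace (rel_mul T)"
  unfolding lin_rel_def complex_vector.subspace_def rel_mul_def by fastforce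

lemma has_orthogonal_projection_rel_mul:
  assumes "closed_lin_rel T"
  shows "has_orthogonal_projection (rel_mul T)"
proof -
  have "rel_mul T = Pair 0 -` T" by (auto simp: rel_mul_def)
  then have "closed (rel_mul T)"
    using assms by (simp add: closed_lin_rel_def closed_vimage continuous_on_Pair)
  then show ?thesis
    using assms by (simp add: closed_lin_rel_def subspace_rel_mul closed_subspace_has_orthogonal_projection)
qed

lemma closed_lin_rel_decomp:
  assumes T: "closed_lin_rel T" and "(x, y) \<in> T"
  obtains y0 where "(0, y0) \<in> T" and "(x, y - y0) \<in> rel_s T"
proof -
  obtain y0 where "(0, y0) \<in> T" and orth: "\<And>m. (0, m) \<in> T \<Longrightarrow> cinner (y - y0) m = 0"
    using has_orthogonal_projection_rel_mul[OF T]
    by (auto simp: has_orthogonal_projection_def rel_mul_def)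
  moreover have "lin_rel T" using T by (simp add: closed_lin_rel_def)
  then have "(x - 0, y - y0) \<in> T"
    using \<open>(x, y) \<in> T\<close> \<open>(0, y0) \<in> T\<close> by (rule lin_rel_diff)
  ultimately show thesis
    using orth by (intro that) (auto simp: rel_s_def orth_diff_def rel_inf_def cinner2_def)
qed

lemma rel_dom_mono: "S \<subseteq> T \<Longrightarrow> rel_dom S \<subseteq> rel_dom T"
  by (auto simp: rel_dom_def)

lemma rel_mul_mono: "S \<subseteq> T \<Longrightarrow> rel_mul S \<subseteq> rel_mul T"
  by (auto simp: rel_mul_def)

lemma rel_adj_iff: "(f, g) \<in> rel_adj T \<longleftrightarrow> (\<forall>x y. (x, y) \<in> T \<longrightarrow> cinner g x = cinner f y)"
  by (auto simp: rel_adj_def)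

lemma lin_rel_rel_adj: "lin_rel (rel_adj T)"
  unfolding lin_rel_def by (auto simp: rel_adj_iff cinner_add_left cinner_scaleC_left)

lemma rel_adj_antimono: "S \<subseteq> T \<Longrightarrow> rel_adj T \<subseteq> rel_adj S"
  by (auto simp: rel_adj_def)

lemma rel_adj_subset_swap:
  assumes "S \<subseteq> rel_adj T"
  shows "T \<subseteq> rel_adj S"
proof (clarsimp simp: rel_adj_iff)
  fix a b x y
  assume "(a, b) \<in> T" "(x, y) \<in> S"
  then have "cinner y a = cinner x b" using assms by (auto simp: rel_adj_iff)
  then show "cinner b x = cinner a y" by (metis cinner_commute)
qed

lemma subset_rel_adj_adj: "T \<subseteq> rel_adj (rel_adj T)"
  by (rule rel_adj_subset_swap) simp

lemma rel_adj_rotate_iff: "(- g, f) \<in> rel_adj T \<longleftrightarrow> (\<forall>q\<in>T. cinner (f, g) q = 0)"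
  by (force simp: rel_adj_iff cinner_minus_left eq_neg_iff_add_eq_0)

lemma rel_adj_adj_closed:
  assumes T: "closed_lin_rel T"
  shows "rel_adj (rel_adj T) = T"
proof
  show "rel_adj (rel_adj T) \<subseteq> T"
  proof
    fix z
    assume z: "z \<in> rel_adj (rel_adj T)"
    obtain p where "p \<in> T" and orth: "\<forall>q\<in>T. cinner (z - p) q = 0"
      using closed_lin_rel_has_orthogonal_projection[OF T]
      unfolding has_orthogonal_projection_def by blast
    obtain r1 r2 where r: "z - p = (r1, r2)" by fastforce
    have "z - p \<in> rel_adj (rel_adj T)"
      using z \<open>p \<in> T\<close> subset_rel_adj_adj lin_rel_rel_adj[unfolded lin_rel_iff_subspace]
      by (blast intro: complex_vector.subspace_diff)
    moreover have "(- r2, r1) \<in> rel_adj T"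
      using orth r by (simp add: rel_adj_rotate_iff)
    ultimately have "cinner r2 (- r2) = cinner r1 r1"
      unfolding r rel_adj_iff[of r1 r2] by blast
    then have "cinner r1 r1 = - cinner r2 r2"
      by (simp add: cinner_minus_right)
    then have "z - p = 0"
      using r cinner_self_eq_neg_imp_zero by (simp add: zero_prod_def)
    then show "z \<in> T" using \<open>p \<in> T\<close> by simp
  qed
  show "T \<subseteq> rel_adj (rel_adj T)" by (rule subset_rel_adj_adj)
qed

lemma has_orthogonal_projection_rel_adj:
  assumes "has_orthogonal_projection T"
  shows "has_orthogonal_projection (rel_adj T)"
  unfolding has_orthogonal_projection_def
proof
  fix z :: "'a \<times> 'a"
  obtain z1 z2 where z: "z = (z1, z2)" by fastforce
  \<comment> \<open>T* is the rotated orthogonal complement of T, so project the rotated point (z2, -z1) onto T\<close>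
  obtain a1 a2 where a: "(a1, a2) \<in> T" and orth: "\<forall>q\<in>T. cinner ((z2, - z1) - (a1, a2)) q = 0"
    using assms unfolding has_orthogonal_projection_def by fastforce
  have "\<forall>q\<in>T. cinner (z2 - a1, - z1 - a2) q = 0"
    using orth by simp
  then have "(- (- z1 - a2), z2 - a1) \<in> rel_adj T"
    by (rule rel_adj_rotate_iff[THEN iffD2])
  then have p: "(a2 + z1, z2 - a1) \<in> rel_adj T"
    by (simp only: minus_diff_eq diff_minus_eq_add)
  have "cinner (z - (a2 + z1, z2 - a1)) q = 0" if "q \<in> rel_adj T" for q
  proof -
    obtain f g where q: "q = (f, g)" by fastforce
    then have "cinner g a1 = cinner f a2" using that a by (simp add: rel_adj_iff)
    then have "cinner a1 g = cinner a2 f" by (metis cinner_commute)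
    then show ?thesis by (simp add: z q cinner_minus_left)
  qed
  with p show "\<exists>p\<in>rel_adj T. \<forall>q\<in>rel_adj T. cinner (z - p) q = 0" by blast
qed

lemma rel_restrict_rel_adj_subset:
  assumes "lin_rel Q" and "Q \<subseteq> rel_adj P" and "rel_mul (rel_adj P) \<subseteq> rel_mul Q"
  shows "rel_restrict (rel_adj P) (rel_dom Q) \<subseteq> Q"
proof (rule subrelI)
  fix x y
  assume "(x, y) \<in> rel_restrict (rel_adj P) (rel_dom Q)"
  then have "(x, y) \<in> rel_adj P" and "x \<in> rel_dom Q" by (auto simp: rel_restrict_def)
  then obtain h where "(x, h) \<in> Q" by (auto simp: rel_dom_def)
  then have "(x - x, y - h) \<in> rel_adj P"
    using \<open>(x, y) \<in> rel_adj P\<close> assms(2) by (blast intro: lin_rel_diff lin_rel_rel_adj)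
  then have "(0, y - h) \<in> Q" using assms(3) by (auto simp: rel_mul_def)
  then have "(x + 0, h + (y - h)) \<in> Q" using \<open>(x, h) \<in> Q\<close> assms(1) by (blast intro: lin_rel_add)
  then show "(x, y) \<in> Q" by simp
qed

section \<open>Defect numbers of extensions\<close>

lemma lin_rel_twisted_pair:
  assumes "lin_rel S" and "lin_rel T"
  shows "lin_rel {(u, v). (u, - v) \<in> S \<and> (v, u) \<in> T}"
  unfolding lin_rel_def
proof (intro conjI ballI allI impI)
  fix r s
  assume "r \<in> {(u, v). (u, - v) \<in> S \<and> (v, u) \<in> T}" and "s \<in> {(u, v). (u, - v) \<in> S \<and> (v, u) \<in> T}"
  then show "r + s \<in> {(u, v). (u, - v) \<in> S \<and> (v, u) \<in> T}"
    using lin_rel_add[OF assms(1)] lin_rel_add[OF assms(2)] by (cases r, cases s) fastforce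
qed (use assms in \<open>auto intro: lin_rel_zero dest: lin_rel_scaleC\<close>)

lemma quot_dim_dom_rel_adj_le:
  assumes P: "lin_rel P" "has_orthogonal_projection P" and Q: "lin_rel Q"
    and "P \<subseteq> rel_adj Q" and mul: "rel_mul (rel_adj P) \<subseteq> rel_mul Q"
  shows "quot_dim (rel_dom (rel_adj Q)) (rel_dom P) \<le> quot_dim (rel_dom (rel_adj P)) (rel_dom Q)"
proof -
  \<comment> \<open>R relates x to -r2, where (r1, r2) is the component of (x, y) \<in> Q* orthogonal to P\<close>
  define R where "R = {(u, v). (u, - v) \<in> rel_adj Q \<and> (v, u) \<in> rel_adj P}"
  have "complex_vector.subspace R"
    unfolding R_def lin_rel_iff_subspace[symmetric] by (intro lin_rel_twisted_pair lin_rel_rel_adj)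
  moreover have "\<exists>w x'. (w, x') \<in> R \<and> x' \<in> rel_dom (rel_adj P) \<and> x - w \<in> rel_dom P"
    if x: "x \<in> rel_dom (rel_adj Q)" for x
  proof -
    obtain y where xy: "(x, y) \<in> rel_adj Q" using x by (auto simp: rel_dom_def)
    obtain p1 p2 where p: "(p1, p2) \<in> P" and orth: "\<forall>q\<in>P. cinner ((x, y) - (p1, p2)) q = 0"
      using P(2) unfolding has_orthogonal_projection_def by fastforce
    have "(x - p1, y - p2) \<in> rel_adj Q"
      using xy p \<open>P \<subseteq> rel_adj Q\<close> by (blast intro: lin_rel_diff lin_rel_rel_adj)
    moreover have "(- (y - p2), x - p1) \<in> rel_adj P"
      using orth by (intro rel_adj_rotate_iff[THEN iffD2]) simp
    moreover have "x - (x - p1) \<in> rel_dom P"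
      using p by (auto simp: rel_dom_def)
    ultimately show ?thesis
      by (intro exI[of _ "x - p1"] exI[of _ "- (y - p2)"]) (auto simp: R_def rel_dom_def)
  qed
  moreover have "w \<in> rel_dom P" if "(w, x') \<in> R" and "x' \<in> rel_dom Q" for w x'
  proof -
    have "Q \<subseteq> rel_adj P" using \<open>P \<subseteq> rel_adj Q\<close> by (rule rel_adj_subset_swap)
    then have "(w, - x') \<in> rel_adj Q" and "(x', w) \<in> Q"
      using that rel_restrict_rel_adj_subset[OF Q _ mul] by (auto simp: R_def rel_restrict_def)
    then have "cinner (- x') x' = cinner w w" by (simp add: rel_adj_iff)
    then have "w = 0" using cinner_self_eq_neg_imp_zero[of w x'] by (simp add: cinner_minus_left)
    then show ?thesis using complex_vector.subspace_0[OF subspace_rel_dom[OF P(1)]] by simp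
  qed
  ultimately show ?thesis
    using subspace_rel_dom[OF P(1)] complex_vector.subspace_0[OF subspace_rel_dom[OF Q]]
    by (intro quot_dim_le_via_relation[of R]) blast+
qed

lemma rel_mul_rel_adj_subset:
  assumes B: "closed_lin_rel B" and "B \<subseteq> rel_adj A"
    and regular: "rel_s B \<subseteq> rel_s (rel_adj A)"
    and trivial: "rel_mul (rel_adj A) \<inter> rel_ker (rel_adj B) = {0}"
  shows "rel_mul (rel_adj A) \<subseteq> rel_mul B"
proof
  fix m
  assume "m \<in> rel_mul (rel_adj A)"
  obtain m0 where "(0, m0) \<in> B" and m_orth: "\<And>m'. (0, m') \<in> B \<Longrightarrow> cinner (m - m0) m' = 0"
    using has_orthogonal_projection_rel_mul[OF B]
    by (auto simp: has_orthogonal_projection_def rel_mul_def)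
  define q where "q = m - m0"
  have "(0, m) \<in> rel_adj A"
    using \<open>m \<in> rel_mul (rel_adj A)\<close> by (simp add: rel_mul_def)
  then have "(0 - 0, m - m0) \<in> rel_adj A"
    using \<open>(0, m0) \<in> B\<close> \<open>B \<subseteq> rel_adj A\<close> by (blast intro: lin_rel_diff lin_rel_rel_adj)
  then have q_adj: "(0, q) \<in> rel_adj A" by (simp add: q_def)
  have "(q, 0) \<in> rel_adj B"
    unfolding rel_adj_iff
  proof (intro allI impI)
    fix x y
    assume "(x, y) \<in> B"
    then obtain y0 where "(0, y0) \<in> B" and "(x, y - y0) \<in> rel_s B"
      by (rule closed_lin_rel_decomp[OF B])
    then have "(x, y - y0) \<in> rel_s (rel_adj A)"
      using regular by blast
    moreover have "(0, q) \<in> rel_inf (rel_adj A)"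
      using q_adj by (simp add: rel_inf_def)
    ultimately have "cinner (y - y0) q = 0"
      by (auto simp: rel_s_def orth_diff_def cinner2_def)
    moreover have "cinner q y0 = 0"
      using m_orth[OF \<open>(0, y0) \<in> B\<close>] by (simp add: q_def)
    ultimately have "cinner q y = 0"
      using cinner_diff_right[of q y y0] cinner_commute[of q "y - y0"] by simp
    then show "cinner 0 x = cinner q y" by simp
  qed
  then have "q = 0"
    using trivial q_adj by (auto simp: rel_mul_def rel_ker_def)
  then show "m \<in> rel_mul B"
    using \<open>(0, m0) \<in> B\<close> by (simp add: q_def rel_mul_def)
qed

lemma quot_dims_Ext_eq:
  assumes A: "closed_lin_rel A" and B: "closed_lin_rel B" and At: "closed_lin_rel At"
    and "A \<subseteq> At" and "At \<subseteq> rel_adj B"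
    and mul_A: "rel_mul (rel_adj A) \<subseteq> rel_mul B" and mul_B: "rel_mul (rel_adj B) \<subseteq> rel_mul A"
  shows "quot_dim (rel_dom (rel_adj B)) (rel_dom At) = quot_dim (rel_dom (rel_adj At)) (rel_dom B)"
    and "quot_dim (rel_dom (rel_adj A)) (rel_dom (rel_adj At)) = quot_dim (rel_dom At) (rel_dom A)"
proof -
  have lin: "lin_rel A" "lin_rel B" "lin_rel At"
    using A B At by (simp_all add: closed_lin_rel_def)
  have proj: "has_orthogonal_projection A" "has_orthogonal_projection B" "has_orthogonal_projection At"
    using A B At by (simp_all add: closed_lin_rel_has_orthogonal_projection)
  have "B \<subseteq> rel_adj At" using \<open>At \<subseteq> rel_adj B\<close> by (rule rel_adj_subset_swap)
  have "rel_adj At \<subseteq> rel_adj A" using \<open>A \<subseteq> At\<close> by (rule rel_adj_antimono)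
  have adj_adj: "rel_adj (rel_adj At) = At" using At by (rule rel_adj_adj_closed)
  show "quot_dim (rel_dom (rel_adj B)) (rel_dom At) = quot_dim (rel_dom (rel_adj At)) (rel_dom B)"
  proof (rule order.antisym)
    show "quot_dim (rel_dom (rel_adj B)) (rel_dom At) \<le> quot_dim (rel_dom (rel_adj At)) (rel_dom B)"
      using rel_mul_mono[OF \<open>rel_adj At \<subseteq> rel_adj A\<close>] mul_A
      by (intro quot_dim_dom_rel_adj_le lin proj \<open>At \<subseteq> rel_adj B\<close>) blast
    show "quot_dim (rel_dom (rel_adj At)) (rel_dom B) \<le> quot_dim (rel_dom (rel_adj B)) (rel_dom At)"
      using mul_B rel_mul_mono[OF \<open>A \<subseteq> At\<close>]
      by (intro quot_dim_dom_rel_adj_le lin proj \<open>B \<subseteq> rel_adj At\<close>) blast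
  qed
  show "quot_dim (rel_dom (rel_adj A)) (rel_dom (rel_adj At)) = quot_dim (rel_dom At) (rel_dom A)"
  proof (rule order.antisym)
    have "rel_mul (rel_adj (rel_adj At)) \<subseteq> rel_mul A"
      using adj_adj rel_mul_mono[OF \<open>At \<subseteq> rel_adj B\<close>] mul_B by simp
    then show "quot_dim (rel_dom (rel_adj A)) (rel_dom (rel_adj At)) \<le> quot_dim (rel_dom At) (rel_dom A)"
      using quot_dim_dom_rel_adj_le[OF lin_rel_rel_adj has_orthogonal_projection_rel_adj[OF proj(3)]
          lin(1) \<open>rel_adj At \<subseteq> rel_adj A\<close>]
      by (simp add: adj_adj)
    have "rel_mul (rel_adj A) \<subseteq> rel_mul (rel_adj At)"
      using mul_A rel_mul_mono[OF \<open>B \<subseteq> rel_adj At\<close>] by blast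
    then show "quot_dim (rel_dom At) (rel_dom A) \<le> quot_dim (rel_dom (rel_adj A)) (rel_dom (rel_adj At))"
      using quot_dim_dom_rel_adj_le[OF lin(1) proj(1) lin_rel_rel_adj, of At] \<open>A \<subseteq> At\<close>
      by (simp add: adj_adj)
  qed
qed

lemma def_num_eq_add:
  assumes "lin_rel B" and "A \<subseteq> At" and "At \<subseteq> rel_adj B"
  shows "def_num A B = quot_dim (rel_dom (rel_adj A)) (rel_dom (rel_adj At))
    + quot_dim (rel_dom (rel_adj At)) (rel_dom B)"
  unfolding def_num_def
  using rel_dom_mono[OF rel_adj_subset_swap[OF assms(3)]] rel_dom_mono[OF rel_adj_antimono[OF assms(2)]]
  by (intro quot_dim_add subspace_rel_dom lin_rel_rel_adj assms(1))

theorem theorem3p1: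
  fixes A B At :: "('a::chilbert_space \<times> 'a) set"
  assumes "closed_lin_rel A" and "closed_lin_rel B"
    and "dual_pair A B"
    and "rel_restrict (rel_s (rel_adj A)) (rel_dom B) = rel_s B"
    and "rel_restrict (rel_s (rel_adj B)) (rel_dom A) = rel_s A"
    and "rel_mul (rel_adj B) \<inter> rel_ker (rel_adj A) = {0}"
    and "rel_mul (rel_adj A) \<inter> rel_ker (rel_adj B) = {0}"
    and "At \<in> Ext A B"
  shows "def_num A B = quot_dim (rel_dom (rel_adj B)) (rel_dom At)
                        + quot_dim (rel_dom (rel_adj A)) (rel_dom (rel_adj At))
       \<and> def_num A B = quot_dim (rel_dom At) (rel_dom A)
                        + quot_dim (rel_dom (rel_adj At)) (rel_dom B)
       \<and> (quasi_selfadjoint A B At \<longrightarrow>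
            def_num A B = 2 * quot_dim (rel_dom (rel_adj B)) (rel_dom At)
          \<and> quot_dim (rel_dom (rel_adj B)) (rel_dom At)
              = quot_dim (rel_dom (rel_adj A)) (rel_dom (rel_adj At))
          \<and> quot_dim (rel_dom (rel_adj A)) (rel_dom (rel_adj At))
              = quot_dim (rel_dom At) (rel_dom A)
          \<and> quot_dim (rel_dom At) (rel_dom A)
              = quot_dim (rel_dom (rel_adj At)) (rel_dom B))"
proof -
  have "A \<subseteq> rel_adj B" using assms(3) by (simp add: dual_pair_def)
  have At: "closed_lin_rel At" "A \<subseteq> At" "At \<subseteq> rel_adj B"
    using assms(8) by (simp_all add: Ext_def)
  have "rel_mul (rel_adj A) \<subseteq> rel_mul B"
    using assms(2,7) rel_adj_subset_swap[OF \<open>A \<subseteq> rel_adj B\<close>] assms(4)[unfolded rel_restrict_def]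
    by (intro rel_mul_rel_adj_subset) blast+
  moreover have "rel_mul (rel_adj B) \<subseteq> rel_mul A"
    using assms(1,6) \<open>A \<subseteq> rel_adj B\<close> assms(5)[unfolded rel_restrict_def]
    by (intro rel_mul_rel_adj_subset) blast+
  ultimately have "quot_dim (rel_dom (rel_adj B)) (rel_dom At) = quot_dim (rel_dom (rel_adj At)) (rel_dom B)"
    and "quot_dim (rel_dom (rel_adj A)) (rel_dom (rel_adj At)) = quot_dim (rel_dom At) (rel_dom A)"
    using quot_dims_Ext_eq[OF assms(1,2) At] by blast+
  moreover have "def_num A B = quot_dim (rel_dom (rel_adj A)) (rel_dom (rel_adj At))
      + quot_dim (rel_dom (rel_adj At)) (rel_dom B)"
    using assms(2) At(2,3) by (intro def_num_eq_add) (simp add: closed_lin_rel_def)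
  ultimately show ?thesis
    by (auto simp: quasi_selfadjoint_def add.commute mult_2)
qed

end
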